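(* For every positive integer $k$ and every integer $A\ge0$, \[\mathcal{R}_{k,(k+1)^2}\big(Ak(k+1)\big)=\mathcal{R}_{k+1,k(k+1)}\big(Ak(k+1)\big)=\tfrac12 kA(A+1)+(A+1).\]
   Context: For $a,b>0$ and $t\ge0$, let $\Delta_{a,b}(t)\subset\mathbb{R}^2$ be the closed right triangle with vertices $(0,0)$, $(t/a,0)$ and $(0,t/b)$, and let $\mathcal{R}_{a,b}(t)=\#\big(\Delta_{a,b}(t)\cap\mathbb{Z}_{\ge0}^2\big)$ be the number of lattice points it contains. *)

theory Defs
  imports "HOL-Analysis.Analysis"
begin

definition triangle :: "real \<Rightarrow> real \<Rightarrow> real \<Rightarrow> (real \<times> real) set" where
  "triangle a b t = convex hull {(0,0), (t/a, 0), (0, t/b)}"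

definition R :: "real \<Rightarrow> real \<Rightarrow> real \<Rightarrow> nat" where
  "R a b t = card {(x::nat, y::nat). (real x, real y) \<in> triangle a b t}"

end

theory Submission
  imports Defs
begin

text \<open>Both counts equal the number of \<open>(x, y) \<in> \<nat>\<^sup>2\<close> with \<open>x + k y \<le> A k\<close>. The second
triangle is the dilation by \<open>k + 1\<close> of the triangle with \<open>a = 1\<close>, \<open>b = k\<close>, \<open>t = A k\<close>. For the
first, write \<open>x = (k + 1) q + r\<close> with \<open>r \<le> k\<close> and exchange \<open>q\<close> with \<open>y\<close>: the point
\<open>(x', y') = ((k + 1) y + r, q)\<close> satisfies \<open>k x' + (k + 1)\<^sup>2 y' + r = (k + 1) (x + k y)\<close>, so,
as \<open>r < k + 1\<close>, it lies below the line \<open>k x' + (k + 1)\<^sup>2 y' = (k + 1) A k\<close> exactly when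
\<open>x + k y \<le> A k\<close>; this exchange is an involution of \<open>\<nat>\<^sup>2\<close>. Finally, row \<open>y \<le> A\<close> of
\<open>x + k y \<le> A k\<close> contains \<open>k (A - y) + 1\<close> points.\<close>

lemma mem_triangle_iff:
  assumes a: "a > 0" and b: "b > 0" and t: "t \<ge> 0"
  shows "(x, y) \<in> triangle a b t \<longleftrightarrow> x \<ge> 0 \<and> y \<ge> 0 \<and> a * x + b * y \<le> t"
proof
  assume "(x, y) \<in> triangle a b t"
  then obtain u v where uv: "0 \<le> u" "0 \<le> v" "u + v \<le> 1"
    and x: "x = u * (t / a)" and y: "y = v * (t / b)"
    unfolding triangle_def convex_hull_3_alt by auto
  have "a * x + b * y = (u + v) * t" using a b by (simp add: x y field_simps)
  also have "\<dots> \<le> t" using uv t by (simp add: mult_left_le_one_le)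
  finally show "x \<ge> 0 \<and> y \<ge> 0 \<and> a * x + b * y \<le> t" using x y uv a b t by simp
next
  assume h: "x \<ge> 0 \<and> y \<ge> 0 \<and> a * x + b * y \<le> t"
  show "(x, y) \<in> triangle a b t"
  proof (cases "t = 0")
    case True
    moreover have "a * x \<ge> 0" "b * y \<ge> 0" using h a b by simp_all
    ultimately have "a * x = 0" "b * y = 0" using h by linarith+
    then have "x = 0" "y = 0" using a b by simp_all
    then show ?thesis unfolding triangle_def by (simp add: hull_inc)
  next
    case False
    then have "t > 0" using t by simp
    then have "(x, y) = (0, 0) + (a * x / t) *\<^sub>R ((t / a, 0) - (0, 0)) + (b * y / t) *\<^sub>R ((0, t / b) - (0, 0))"
      and "0 \<le> a * x / t" "0 \<le> b * y / t" "a * x / t + b * y / t \<le> 1"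
      using a b h by (auto simp: add_divide_distrib[symmetric])
    then show ?thesis unfolding triangle_def convex_hull_3_alt by blast
  qed
qed

lemma triangle_scale: "c \<noteq> 0 \<Longrightarrow> triangle (c * a) (c * b) (c * t) = triangle a b t"
  by (simp add: triangle_def)

lemma R_scale: "c \<noteq> 0 \<Longrightarrow> R (c * a) (c * b) (c * t) = R a b t"
  by (simp add: R_def triangle_scale)

lemma R_of_nat:
  assumes "a > 0" "b > 0"
  shows "R (real a) (real b) (real t) = card {(x, y). a * x + b * y \<le> t}"
proof -
  have "(real x, real y) \<in> triangle (real a) (real b) (real t) \<longleftrightarrow> a * x + b * y \<le> t" for x y
    using assms by (subst mem_triangle_iff) (simp_all flip: of_nat_mult of_nat_add)
  then show ?thesis by (simp add: R_def)
qed

definition digit_swap :: "nat \<Rightarrow> nat \<times> nat \<Rightarrow> nat \<times> nat" where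
  "digit_swap m = (\<lambda>(x, y). (m * y + x mod m, x div m))"

lemma digit_swap_involution:
  assumes "m > 0"
  shows "digit_swap m (digit_swap m p) = p"
proof (cases p)
  case (Pair x y)
  have "(m * y + x mod m) div m = y" "(m * y + x mod m) mod m = x mod m"
    using assms by simp_all
  then show ?thesis by (simp add: digit_swap_def Pair)
qed

lemma digit_swap_weight:
  "k * fst (digit_swap (k + 1) (x, y)) + (k + 1)\<^sup>2 * snd (digit_swap (k + 1) (x, y)) + x mod (k + 1)
     = (k + 1) * (x + k * y)"
proof -
  define q r where "q = x div (k + 1)" and "r = x mod (k + 1)"
  have swap: "digit_swap (k + 1) (x, y) = ((k + 1) * y + r, q)"
    by (simp add: digit_swap_def q_def r_def)
  have "x = (k + 1) * q + r" unfolding q_def r_def by (metis div_mult_mod_eq mult.commute)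
  then show ?thesis
    unfolding swap fst_conv snd_conv r_def[symmetric] by (simp add: power2_eq_square algebra_simps)
qed

lemma digit_swap_below_line_iff:
  "k * fst (digit_swap (k + 1) (x, y)) + (k + 1)\<^sup>2 * snd (digit_swap (k + 1) (x, y)) \<le> (k + 1) * n
     \<longleftrightarrow> x + k * y \<le> n"
  (is "?lhs \<le> _ \<longleftrightarrow> _")
proof
  assume "?lhs \<le> (k + 1) * n"
  then have "(k + 1) * (x + k * y) < (k + 1) * n + (k + 1)"
    using digit_swap_weight[of k x y] mod_less_divisor[of "k + 1" x] by linarith
  then have "(k + 1) * (x + k * y) < (k + 1) * (n + 1)" by (simp add: algebra_simps)
  then show "x + k * y \<le> n" by (simp only: mult_less_cancel1) linarith
next
  assume "x + k * y \<le> n"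
  then show "?lhs \<le> (k + 1) * n"
    using digit_swap_weight[of k x y] mult_le_mono2[of "x + k * y" n "k + 1"] by linarith
qed

lemma bij_betw_digit_swap:
  "bij_betw (digit_swap (k + 1)) {(x, y). x + k * y \<le> n}
     {(x, y). k * x + (k + 1)\<^sup>2 * y \<le> (k + 1) * n}"
  (is "bij_betw ?f ?S ?T")
proof (rule bij_betw_byWitness[where f' = ?f])
  have in_iff: "?f p \<in> ?T \<longleftrightarrow> p \<in> ?S" for p
    using digit_swap_below_line_iff[of k "fst p" "snd p" n] by (cases p) (simp add: case_prod_beta)
  have inv: "?f (?f p) = p" for p
    by (simp add: digit_swap_involution)
  show "\<forall>p \<in> ?S. ?f (?f p) = p" "\<forall>p \<in> ?T. ?f (?f p) = p"
    using inv by blast+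
  show "?f ` ?S \<subseteq> ?T"
    by (rule image_subsetI) (rule iffD2[OF in_iff])
  show "?f ` ?T \<subseteq> ?S"
    by (rule image_subsetI) (rule iffD1[OF in_iff[of "?f p" for p, unfolded inv]])
qed

lemma finite_below_line:
  assumes "k > 0"
  shows "finite {(x :: nat, y :: nat). x + k * y \<le> n}"
proof (rule finite_subset)
  show "{(x, y). x + k * y \<le> n} \<subseteq> {..n} \<times> {..n}"
  proof (rule subsetI)
    fix p assume "p \<in> {(x, y). x + k * y \<le> n}"
    then obtain x y where p: "p = (x, y)" and "x + k * y \<le> n" by blast
    moreover have "y \<le> k * y" using assms by simp
    ultimately have "x \<le> n" "y \<le> n" by linarith+
    then show "p \<in> {..n} \<times> {..n}" by (simp add: p)
  qed
qed simp

lemma below_line_Suc_eq: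
  "{(x, y). x + k * y \<le> Suc A * k}
     = (\<lambda>(x, y). (x, Suc y)) ` {(x, y). x + k * y \<le> A * k} \<union> (\<lambda>x. (x, 0)) ` {..Suc A * k}"
  by (auto simp: image_iff gr0_conv_Suc)

lemma card_below_line_Suc:
  assumes "k > 0"
  shows "card {(x, y). x + k * y \<le> Suc A * k} = card {(x, y). x + k * y \<le> A * k} + (Suc A * k + 1)"
proof -
  have "inj_on (\<lambda>(x, y). (x, Suc y)) {(x :: nat, y). x + k * y \<le> A * k}"
    by (auto simp: inj_on_def)
  moreover have "inj_on (\<lambda>x. (x, 0 :: nat)) {..Suc A * k}"
    by (auto simp: inj_on_def)
  ultimately show ?thesis
    unfolding below_line_Suc_eq
    by (subst card_Un_disjoint) (auto simp: card_image finite_below_line[OF assms])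
qed

lemma card_below_line:
  assumes "k > 0"
  shows "2 * card {(x, y). x + k * y \<le> A * k} = k * A * (A + 1) + 2 * (A + 1)"
proof (induction A)
  case 0
  have "{(x, y). x + k * y \<le> 0 * k} = {(0, 0)}" using assms by auto
  then show ?case by simp
next
  case (Suc A)
  have "2 * card {(x, y). x + k * y \<le> Suc A * k}
      = 2 * card {(x, y). x + k * y \<le> A * k} + 2 * (Suc A * k + 1)"
    by (simp only: card_below_line_Suc[OF assms] add_mult_distrib2)
  also have "\<dots> = k * Suc A * (Suc A + 1) + 2 * (Suc A + 1)"
    unfolding Suc.IH by (simp add: algebra_simps)
  finally show ?case .
qed

theorem mainTheorem15:
  fixes k A :: nat
  assumes "k \<ge> 1"
  shows "R (real k) (real ((k+1)^2)) (real (A*k*(k+1))) = R (real (k+1)) (real (k*(k+1))) (real (A*k*(k+1)))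
       \<and> real (R (real (k+1)) (real (k*(k+1))) (real (A*k*(k+1)))) = real k * real A * (real A + 1) / 2 + (real A + 1)"
proof -
  let ?N = "card {(x, y). x + k * y \<le> A * k}"
  have "R (real k) (real ((k+1)^2)) (real (A*k*(k+1))) = card {(x, y). k * x + (k + 1)\<^sup>2 * y \<le> (k + 1) * (A * k)}"
    using assms R_of_nat[of k "(k+1)^2" "A*k*(k+1)"] by (simp add: mult.commute)
  also have "\<dots> = ?N"
    using bij_betw_same_card[OF bij_betw_digit_swap] by simp
  finally have first: "R (real k) (real ((k+1)^2)) (real (A*k*(k+1))) = ?N" .
  have "R (real (k+1)) (real (k*(k+1))) (real (A*k*(k+1))) = R (real 1) (real k) (real (A * k))"
    using R_scale[of "real (k + 1)" "real 1" "real k" "real (A * k)"] by (simp add: algebra_simps)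
  also have "\<dots> = ?N"
    using assms R_of_nat[of 1 k "A * k"] by simp
  finally have second: "R (real (k+1)) (real (k*(k+1))) (real (A*k*(k+1))) = ?N" .
  have "real (2 * ?N) = real (k * A * (A + 1) + 2 * (A + 1))"
    using card_below_line assms by simp
  then show ?thesis
    unfolding first second by (simp add: field_simps)
qed

end
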